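(* Let $U_1,\ldots,U_K$ be mutually commuting unitary operators on a Hilbert space $\mathcal{H}_Q$ of finite dimension $D_Q$. If $U_1,\ldots,U_K$ are unambiguously distinguishable, then $K\le D_Q$.
   Context: A finite list of unitary operators $U_1,\ldots,U_K$ on a finite-dimensional Hilbert space $\mathcal{H}_Q$ is called unambiguously distinguishable if there exist a finite-dimensional Hilbert space $\mathcal{H}_A$ (an ancilla) and a unit vector $|\psi\rangle\in\mathcal{H}_Q\otimes\mathcal{H}_A$ such that the $K$ output vectors $(U_j\otimes\mathbb{1}_A)|\psi\rangle$, $j=1,\ldots,K$, are linearly independent (equivalently, some measurement on the output identifies $j$ with zero error probability and with nonzero success probability for every $j$). *)

theory Defs
  imports Complex_Main
begin

(* Operators on H_Q = C^D are D x D complex matrices w.r.t. a fixed orthonormal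
   basis, represented as functions  nat => nat => complex  (entries (i,j), i,j < D).
   Vectors in H_Q (x) H_A = C^DQ (x) C^DA are represented by their coefficients
   psi q a in the product basis |q> (x) |a>, q < DQ, a < DA. *)

definition unitary_op :: "nat \<Rightarrow> (nat \<Rightarrow> nat \<Rightarrow> complex) \<Rightarrow> bool" where
  "unitary_op D U \<longleftrightarrow>
     (\<forall>i<D. \<forall>k<D. (\<Sum>j<D. U i j * cnj (U k j)) = (if i = k then 1 else 0)) \<and>
     (\<forall>i<D. \<forall>k<D. (\<Sum>j<D. cnj (U j i) * U j k) = (if i = k then 1 else 0))"

definition commute_op :: "nat \<Rightarrow> (nat \<Rightarrow> nat \<Rightarrow> complex) \<Rightarrow> (nat \<Rightarrow> nat \<Rightarrow> complex) \<Rightarrow> bool" where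
  "commute_op D U V \<longleftrightarrow>
     (\<forall>i<D. \<forall>k<D. (\<Sum>j<D. U i j * V j k) = (\<Sum>j<D. V i j * U j k))"

definition tensor_id_apply ::
  "nat \<Rightarrow> (nat \<Rightarrow> nat \<Rightarrow> complex) \<Rightarrow> (nat \<Rightarrow> nat \<Rightarrow> complex) \<Rightarrow> nat \<Rightarrow> nat \<Rightarrow> complex" where
  "tensor_id_apply DQ U psi q a = (\<Sum>q'<DQ. U q q' * psi q' a)"

definition unit_vec :: "nat \<Rightarrow> nat \<Rightarrow> (nat \<Rightarrow> nat \<Rightarrow> complex) \<Rightarrow> bool" where
  "unit_vec DQ DA psi \<longleftrightarrow> (\<Sum>q<DQ. \<Sum>a<DA. (cmod (psi q a))\<^sup>2) = 1"

definition lin_indep_family :: "nat \<Rightarrow> nat \<Rightarrow> nat \<Rightarrow> (nat \<Rightarrow> nat \<Rightarrow> nat \<Rightarrow> complex) \<Rightarrow> bool" where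
  "lin_indep_family DQ DA K v \<longleftrightarrow>
     (\<forall>c :: nat \<Rightarrow> complex.
        (\<forall>q<DQ. \<forall>a<DA. (\<Sum>j<K. c j * v j q a) = 0) \<longrightarrow> (\<forall>j<K. c j = 0))"

definition unamb_distinguishable :: "nat \<Rightarrow> nat \<Rightarrow> (nat \<Rightarrow> nat \<Rightarrow> nat \<Rightarrow> complex) \<Rightarrow> bool" where
  "unamb_distinguishable DQ K U \<longleftrightarrow>
     (\<exists>DA psi. unit_vec DQ DA psi \<and>
        lin_indep_family DQ DA K (\<lambda>j. tensor_id_apply DQ (U j) psi))"

end

theory Submission
  imports Defs "HOL-Library.Function_Algebras"
begin

(* Linear independence of the outputs (U_j (x) 1) psi forces the matrices U_j, cut down to
   n x n, to be linearly independent, so their span S has dimension K. A unitary U_j commuting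
   with U_l also satisfies U_j^* U_l = U_l U_j^*, and this identity extends sesquilinearly to all
   A, B in S. Let L_k consist of the elements of S whose first k columns vanish, and V_k of the
   k-th columns of elements of L_k. Rank-nullity for the k-th column map gives
   dim L_k <= dim V_k + dim L_(k+1). For A in L_t and k < t, normality of A turns its zero k-th
   column into a zero k-th row, and then A^* B = B A^* makes the t-th column of A orthogonal to
   the k-th column of every B in S. So V_0, ..., V_(n-1) are mutually orthogonal subspaces of C^n
   and K = dim L_0 <= dim V_0 + ... + dim V_(n-1) <= n. *)

section \<open>Dimension bounds in vector spaces\<close>

context vector_space
begin

lemma span_induct2:
  assumes "a \<in> span A" "b \<in> span B"
    and "\<And>a b. a \<in> A \<Longrightarrow> b \<in> B \<Longrightarrow> R a b"
    and "\<And>a. subspace {b. R a b}" and "\<And>b. subspace {a. R a b}"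
  shows "R a b"
proof -
  have R_gen: "R a' b" if "a' \<in> A" for a'
    using \<open>b \<in> span B\<close> by (rule span_induct[where P = "R a'"]) (use assms that in auto)
  show ?thesis
    using \<open>a \<in> span A\<close> by (rule span_induct[where P = "\<lambda>a. R a b"]) (use assms R_gen in auto)
qed

lemma card_le_dim_if_independent:
  assumes "independent B" "B \<subseteq> V" "V \<subseteq> span T" "finite T"
  shows "card B \<le> dim V"
proof -
  obtain C where C: "C \<subseteq> V" "independent C" "V \<subseteq> span C" "card C = dim V"
    by (rule basis_exists)
  have "finite C"
    using independent_span_bound[OF assms(4) C(2)] C(1) assms(3) by blast
  moreover have "B \<subseteq> span C"
    using assms(2) C(3) by blast
  ultimately have "card B \<le> card C"
    using independent_span_bound assms(1) by blast
  with C(4) show ?thesis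
    by simp
qed

lemma independent_Un:
  assumes "independent A" "independent B" and span_Int: "span A \<inter> span B = {0}"
  shows "independent (A \<union> B)"
proof -
  have not_in_span: "a \<notin> span ((A \<union> B) - {a})"
    if "a \<in> A" "independent A" "span A \<inter> span B = {0}" for a A B
  proof
    assume "a \<in> span ((A \<union> B) - {a})"
    then have "a \<in> span ((A - {a}) \<union> B)"
      using span_mono[of "(A \<union> B) - {a}" "(A - {a}) \<union> B"] by blast
    then obtain x y where xy: "a = x + y" "x \<in> span (A - {a})" "y \<in> span B"
      unfolding span_Un by blast
    have "x \<in> span A"
      using xy(2) span_mono[of "A - {a}" A] by blast
    then have "a - x \<in> span A"
      using span_diff span_base \<open>a \<in> A\<close> by blast
    then have "y = 0"
      using xy(1,3) that(3) by auto
    then have "a \<in> span (A - {a})"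
      using xy(1,2) by simp
    then show False
      using that(1,2) dependent_def by blast
  qed
  have "a \<notin> span ((A \<union> B) - {a})" if "a \<in> A \<union> B" for a
    using that not_in_span[of a A B] not_in_span[of a B A] assms
    by (metis Int_commute Un_commute Un_iff)
  then show ?thesis
    unfolding dependent_def by blast
qed

lemma dim_add_dim_le_dim_Un:
  assumes span_Int: "span X \<inter> span Y = {0}"
    and "X \<subseteq> span T" "Y \<subseteq> span T" "finite T"
  shows "dim X + dim Y \<le> dim (X \<union> Y)"
proof -
  obtain BX where BX: "BX \<subseteq> X" "independent BX" "X \<subseteq> span BX" "card BX = dim X"
    by (rule basis_exists)
  obtain BY where BY: "BY \<subseteq> Y" "independent BY" "Y \<subseteq> span BY" "card BY = dim Y"
    by (rule basis_exists)
  have span_BX: "span BX = span X" and span_BY: "span BY = span Y"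
    unfolding span_eq using BX(1,3) BY(1,3) span_superset by blast+
  have fin: "finite BX" "finite BY"
    using independent_span_bound[OF \<open>finite T\<close>] BX(1,2) BY(1,2) assms(2,3) by blast+
  have "BX \<inter> BY \<subseteq> {0}"
    using span_Int BX(1) BY(1) span_superset by blast
  moreover have "0 \<notin> BX"
    using BX(2) dependent_zero by blast
  ultimately have disj: "BX \<inter> BY = {}"
    by blast
  have "independent (BX \<union> BY)"
    using independent_Un[OF BX(2) BY(2)] span_Int span_BX span_BY by simp
  then have "card (BX \<union> BY) \<le> dim (X \<union> Y)"
    by (rule card_le_dim_if_independent) (use BX(1) BY(1) assms(2-4) in auto)
  then show ?thesis
    using card_Un_disjoint[OF fin disj] BX(4) BY(4) by simp
qed

lemma dim_image_of_independent_family: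
  assumes indep: "\<And>c. (\<Sum>j<K. scale (c j) (v j)) = 0 \<Longrightarrow> \<forall>j<K. c j = 0"
  shows "dim (v ` {..<K}) = K"
proof -
  have inj: "inj_on v {..<K}"
  proof (rule inj_onI, rule ccontr)
    fix j l assume jl: "j \<in> {..<K}" "l \<in> {..<K}" "v j = v l" "j \<noteq> l"
    define c :: "nat \<Rightarrow> 'a" where "c x = (if x = j then 1 else if x = l then -1 else 0)" for x
    have "(\<Sum>x<K. scale (c x) (v x)) = (\<Sum>x\<in>{j, l}. scale (c x) (v x))"
      by (rule sum.mono_neutral_right) (use jl in \<open>auto simp: c_def\<close>)
    also have "\<dots> = 0"
      using jl by (simp add: c_def)
    finally show False
      using indep[of c] jl by (auto simp: c_def)
  qed
  have "independent (v ` {..<K})"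
  proof (rule independent_if_scalars_zero)
    fix f x assume "(\<Sum>y\<in>v ` {..<K}. scale (f y) y) = 0" "x \<in> v ` {..<K}"
    then show "f x = 0"
      using indep[of "f \<circ> v"] sum.reindex[OF inj, of "\<lambda>y. scale (f y) y"] by auto
  qed simp
  then show ?thesis
    using dim_eq_card_independent card_image[OF inj] by simp
qed

end

context vector_space_pair
begin

lemma dim_le_dim_image_add_dim_kernel:
  assumes f: "Vector_Spaces.linear s1 s2 f"
    and L: "vs1.subspace L" "L \<subseteq> vs1.span T" "finite T"
  shows "vs1.dim L \<le> vs2.dim (f ` L) + vs1.dim {x \<in> L. f x = 0}"
proof -
  let ?N = "{x \<in> L. f x = 0}"
  obtain g where g: "range g \<subseteq> L" "Vector_Spaces.linear s2 s1 g" "\<forall>v\<in>f ` L. f (g v) = v"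
    using linear_exists_right_inverse_on[OF f L(1)] by blast
  obtain C where C: "C \<subseteq> f ` L" "vs2.independent C" "f ` L \<subseteq> vs2.span C"
      "card C = vs2.dim (f ` L)"
    by (rule vs2.basis_exists)
  obtain B where B: "B \<subseteq> ?N" "vs1.independent B" "?N \<subseteq> vs1.span B" "card B = vs1.dim ?N"
    by (rule vs1.basis_exists)
  have "f ` L \<subseteq> vs2.span (f ` T)"
    using L(2) linear_span_image[OF f] by blast
  then have "finite C"
    using vs2.independent_span_bound[OF _ C(2)] C(1) L(3) by blast
  moreover have "finite B"
    using vs1.independent_span_bound[OF L(3) B(2)] B(1) L(2) by blast
  moreover have "L \<subseteq> vs1.span (g ` C \<union> B)"
  proof
    fix x assume x: "x \<in> L"
    interpret g: Vector_Spaces.linear s2 s1 g by (fact g(2))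
    have "g (f x) \<in> vs1.span (g ` C)"
      using C(3) x g.span_image by blast
    moreover have "x - g (f x) \<in> ?N"
      using x g(1,3) vs1.subspace_diff[OF L(1)] linear_diff[OF f] by auto
    then have "x - g (f x) \<in> vs1.span B"
      using B(3) by blast
    ultimately have "g (f x) + (x - g (f x)) \<in> vs1.span (g ` C \<union> B)"
      using vs1.span_mono[of "g ` C" "g ` C \<union> B"] vs1.span_mono[of B "g ` C \<union> B"]
      by (blast intro: vs1.span_add)
    then show "x \<in> vs1.span (g ` C \<union> B)"
      by simp
  qed
  ultimately have "vs1.dim L \<le> card (g ` C \<union> B)"
    by (intro vs1.dim_le_card) auto
  also have "\<dots> \<le> card C + card B"
    using card_Un_le[of "g ` C" B] card_image_le[OF \<open>finite C\<close>, of g] by linarith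
  finally show ?thesis
    using B(4) C(4) by simp
qed

end

section \<open>Vectors and matrices as complex-valued functions\<close>

type_synonym cmat = "nat \<Rightarrow> nat \<Rightarrow> complex"

lemma sum_apply: "(\<Sum>a\<in>A. f a) x = (\<Sum>a\<in>A. f a x)"
  by (induction A rule: infinite_finite_induct) auto

definition vec_scale :: "complex \<Rightarrow> (nat \<Rightarrow> complex) \<Rightarrow> nat \<Rightarrow> complex" where
  "vec_scale c v = (\<lambda>i. c * v i)"

definition mat_scale :: "complex \<Rightarrow> cmat \<Rightarrow> cmat" where
  "mat_scale c X = (\<lambda>i j. c * X i j)"

interpretation vec: vector_space vec_scale
  by unfold_locales (auto simp: vec_scale_def algebra_simps)

interpretation mat: vector_space mat_scale
  by unfold_locales (auto simp: mat_scale_def algebra_simps fun_eq_iff)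

interpretation mat_vec: vector_space_pair mat_scale vec_scale ..

definition vecs :: "nat \<Rightarrow> (nat \<Rightarrow> complex) set" where
  "vecs n = {v. \<forall>i\<ge>n. v i = 0}"

definition vec_unit :: "nat \<Rightarrow> nat \<Rightarrow> complex" where
  "vec_unit k = (\<lambda>i. if i = k then 1 else 0)"

definition vec_inner :: "nat \<Rightarrow> (nat \<Rightarrow> complex) \<Rightarrow> (nat \<Rightarrow> complex) \<Rightarrow> complex" where
  "vec_inner n u v = (\<Sum>i<n. cnj (u i) * v i)"

lemma subspace_vecs: "vec.subspace (vecs n)"
  by (auto simp: vec.subspace_def vecs_def vec_scale_def)

lemma vecs_subset_span_units: "vecs n \<subseteq> vec.span (vec_unit ` {..<n})"
proof
  fix v assume v: "v \<in> vecs n"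
  have "v = (\<Sum>k<n. vec_scale (v k) (vec_unit k))"
  proof
    fix i
    have "(\<Sum>k<n. vec_scale (v k) (vec_unit k)) i = (\<Sum>k<n. if i = k then v k else 0)"
      unfolding sum_apply vec_scale_def vec_unit_def by (rule sum.cong) auto
    then show "v i = (\<Sum>k<n. vec_scale (v k) (vec_unit k)) i"
      using v by (simp add: vecs_def)
  qed
  also have "\<dots> \<in> vec.span (vec_unit ` {..<n})"
    by (intro vec.span_sum vec.span_scale vec.span_base) simp
  finally show "v \<in> vec.span (vec_unit ` {..<n})" .
qed

lemma vec_dim_le:
  assumes "V \<subseteq> vecs n"
  shows "vec.dim V \<le> n"
proof -
  have "vec.dim V \<le> card (vec_unit ` {..<n})"
    using assms vecs_subset_span_units by (intro vec.dim_le_card) auto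
  also have "\<dots> \<le> n"
    using card_image_le[of "{..<n}" vec_unit] by simp
  finally show ?thesis .
qed

lemma vec_inner_self_eq_0D:
  assumes "vec_inner n v v = 0" "i < n"
  shows "v i = 0"
proof -
  have "complex_of_real (\<Sum>i<n. (cmod (v i))\<^sup>2) = vec_inner n v v"
    unfolding vec_inner_def of_real_sum complex_norm_square by (simp add: mult.commute)
  then have "complex_of_real (\<Sum>i<n. (cmod (v i))\<^sup>2) = 0"
    by (simp only: assms(1))
  then have "(\<Sum>i<n. (cmod (v i))\<^sup>2) = 0"
    by (simp only: of_real_eq_0_iff)
  with assms(2) show ?thesis
    by (simp add: sum_nonneg_eq_0_iff)
qed

lemma vec_inner_self_eq_0:
  assumes "v \<in> vecs n" "vec_inner n v v = 0"
  shows "v = 0"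
proof
  fix i
  show "v i = 0 i"
    using vec_inner_self_eq_0D[OF assms(2)] assms(1) by (cases "i < n") (auto simp: vecs_def)
qed

lemma subspace_vec_inner_left: "vec.subspace {u. vec_inner n u v = 0}"
  by (auto simp: vec.subspace_def vec_inner_def vec_scale_def distrib_right sum.distrib
      sum_distrib_left[symmetric] mult.assoc)

lemma subspace_vec_inner_right: "vec.subspace {v. vec_inner n u v = 0}"
  by (auto simp: vec.subspace_def vec_inner_def vec_scale_def distrib_left sum.distrib
      sum_distrib_left[symmetric] mult.left_commute)

lemma dim_Un_orthogonal:
  assumes "X \<subseteq> vecs n" "Y \<subseteq> vecs n"
    and orth: "\<And>x y. x \<in> X \<Longrightarrow> y \<in> Y \<Longrightarrow> vec_inner n x y = 0"
  shows "vec.dim X + vec.dim Y \<le> vec.dim (X \<union> Y)"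
proof (rule vec.dim_add_dim_le_dim_Un[where T = "vec_unit ` {..<n}"])
  have "vec.span X \<inter> vec.span Y \<subseteq> {0}"
  proof
    fix z assume "z \<in> vec.span X \<inter> vec.span Y"
    then have z: "z \<in> vec.span X" "z \<in> vec.span Y"
      by auto
    have "vec_inner n z z = 0"
      using z by (rule vec.span_induct2)
        (use orth subspace_vec_inner_left subspace_vec_inner_right in auto)
    moreover have "z \<in> vecs n"
      using z(1) vec.span_minimal[OF assms(1) subspace_vecs] by blast
    ultimately show "z \<in> {0}"
      using vec_inner_self_eq_0 by blast
  qed
  then show "vec.span X \<inter> vec.span Y = {0}"
    using vec.span_zero[of X] vec.span_zero[of Y] by blast
qed (use assms(1,2) vecs_subset_span_units[of n] in blast)+

definition mats :: "nat \<Rightarrow> cmat set" where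
  "mats n = {X. \<forall>i j. n \<le> i \<or> n \<le> j \<longrightarrow> X i j = 0}"

definition mat_restrict :: "nat \<Rightarrow> cmat \<Rightarrow> cmat" where
  "mat_restrict n X = (\<lambda>i j. if i < n \<and> j < n then X i j else 0)"

definition mat_mult :: "nat \<Rightarrow> cmat \<Rightarrow> cmat \<Rightarrow> cmat" where
  "mat_mult n X Y = (\<lambda>i k. \<Sum>j<n. X i j * Y j k)"

definition mat_adj :: "cmat \<Rightarrow> cmat" where
  "mat_adj X = (\<lambda>i j. cnj (X j i))"

definition mat_one :: "nat \<Rightarrow> cmat" where
  "mat_one n = (\<lambda>i j. if i = j \<and> i < n then 1 else 0)"

lemma subspace_mats: "mat.subspace (mats n)"
  by (auto simp: mat.subspace_def mats_def mat_scale_def)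

lemma mat_restrict_in_mats: "mat_restrict n X \<in> mats n"
  by (simp add: mats_def mat_restrict_def)

lemma mat_adj_in_mats: "X \<in> mats n \<Longrightarrow> mat_adj X \<in> mats n"
  by (auto simp: mats_def mat_adj_def)

lemma mat_mult_in_mats: "X \<in> mats n \<Longrightarrow> Y \<in> mats n \<Longrightarrow> mat_mult n X Y \<in> mats n"
  by (auto simp: mats_def mat_mult_def)

lemma mat_mult_assoc: "mat_mult n (mat_mult n X Y) Z = mat_mult n X (mat_mult n Y Z)"
  unfolding mat_mult_def
  by (auto simp: fun_eq_iff sum_distrib_left sum_distrib_right mult.assoc intro: sum.swap)

lemma mat_mult_one_left:
  assumes "X \<in> mats n"
  shows "mat_mult n (mat_one n) X = X"
proof (intro ext)
  fix i k
  have "mat_mult n (mat_one n) X i k = (\<Sum>j<n. if j = i then X i k else 0)"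
    unfolding mat_mult_def mat_one_def by (rule sum.cong) auto
  then show "mat_mult n (mat_one n) X i k = X i k"
    using assms by (simp add: mats_def)
qed

lemma mat_mult_one_right:
  assumes "X \<in> mats n"
  shows "mat_mult n X (mat_one n) = X"
proof (intro ext)
  fix i k
  have "mat_mult n X (mat_one n) i k = (\<Sum>j<n. if j = k then X i k else 0)"
    unfolding mat_mult_def mat_one_def by (rule sum.cong) auto
  then show "mat_mult n X (mat_one n) i k = X i k"
    using assms by (simp add: mats_def)
qed

lemma mat_mult_restrict:
  "mat_mult n (mat_restrict n X) (mat_restrict n Y) = mat_restrict n (mat_mult n X Y)"
  by (auto simp: fun_eq_iff mat_mult_def mat_restrict_def)

lemma mat_adj_restrict: "mat_adj (mat_restrict n X) = mat_restrict n (mat_adj X)"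
  by (auto simp: fun_eq_iff mat_adj_def mat_restrict_def)

lemma unitary_op_restrict:
  assumes "unitary_op n A"
  shows "mat_mult n (mat_restrict n A) (mat_adj (mat_restrict n A)) = mat_one n"
    and "mat_mult n (mat_adj (mat_restrict n A)) (mat_restrict n A) = mat_one n"
  unfolding mat_adj_restrict mat_mult_restrict using assms
  by (auto simp: fun_eq_iff unitary_op_def mat_restrict_def mat_mult_def mat_adj_def mat_one_def)

lemma commute_op_restrict:
  assumes "commute_op n A B"
  shows "mat_mult n (mat_restrict n A) (mat_restrict n B) = mat_mult n (mat_restrict n B) (mat_restrict n A)"
  unfolding mat_mult_restrict using assms
  by (auto simp: fun_eq_iff commute_op_def mat_restrict_def mat_mult_def)

section \<open>Spans of star-commuting matrices\<close>

definition star_commute :: "nat \<Rightarrow> cmat \<Rightarrow> cmat \<Rightarrow> bool" where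
  "star_commute n A B \<longleftrightarrow> mat_mult n (mat_adj A) B = mat_mult n B (mat_adj A)"

lemma star_commute_restrict_if_unitary_commute:
  assumes "unitary_op n A" "commute_op n A B"
  shows "star_commute n (mat_restrict n A) (mat_restrict n B)"
proof -
  let ?A = "mat_restrict n A" and ?B = "mat_restrict n B"
  let ?A' = "mat_adj ?A"
  have mats: "?A \<in> mats n" "?B \<in> mats n" "?A' \<in> mats n"
    by (simp_all add: mat_restrict_in_mats mat_adj_in_mats)
  have "mat_mult n ?A' ?B = mat_mult n (mat_mult n ?A' ?B) (mat_mult n ?A ?A')"
    using unitary_op_restrict(1)[OF assms(1)] mat_mult_one_right mat_mult_in_mats mats by simp
  also have "\<dots> = mat_mult n ?A' (mat_mult n (mat_mult n ?B ?A) ?A')"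
    by (simp add: mat_mult_assoc)
  also have "\<dots> = mat_mult n ?A' (mat_mult n (mat_mult n ?A ?B) ?A')"
    using commute_op_restrict[OF assms(2)] by simp
  also have "\<dots> = mat_mult n (mat_mult n ?A' ?A) (mat_mult n ?B ?A')"
    by (simp add: mat_mult_assoc)
  also have "\<dots> = mat_mult n ?B ?A'"
    using unitary_op_restrict(2)[OF assms(1)] mat_mult_one_left mat_mult_in_mats mats by simp
  finally show ?thesis
    unfolding star_commute_def .
qed

lemma subspace_star_commute_left: "mat.subspace {A. star_commute n A B}"
  by (auto simp: mat.subspace_def star_commute_def mat_mult_def mat_adj_def mat_scale_def fun_eq_iff
      distrib_left distrib_right sum.distrib sum_distrib_left[symmetric] mult.assoc mult.left_commute)

lemma subspace_star_commute_right: "mat.subspace {B. star_commute n A B}"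
  by (auto simp: mat.subspace_def star_commute_def mat_mult_def mat_adj_def mat_scale_def fun_eq_iff
      distrib_left distrib_right sum.distrib sum_distrib_left[symmetric] mult.assoc mult.left_commute)

definition col :: "nat \<Rightarrow> cmat \<Rightarrow> nat \<Rightarrow> complex" where
  "col k X = (\<lambda>i. X i k)"

lemma linear_col: "Vector_Spaces.linear mat_scale vec_scale (col k)"
  by (auto simp: Vector_Spaces.linear_iff mat.vector_space_axioms vec.vector_space_axioms
      col_def mat_scale_def vec_scale_def)

lemma col_in_vecs: "X \<in> mats n \<Longrightarrow> col k X \<in> vecs n"
  by (simp add: mats_def vecs_def col_def)

lemma star_commute_row_zero_if_col_zero:
  assumes "star_commute n A A" "col k A = 0" "i < n"
  shows "A k i = 0"
proof -
  have "vec_inner n (\<lambda>j. A k j) (\<lambda>j. A k j) = mat_mult n A (mat_adj A) k k"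
    by (simp add: vec_inner_def mat_mult_def mat_adj_def mult.commute)
  also have "\<dots> = mat_mult n (mat_adj A) A k k"
    using assms(1) by (simp add: star_commute_def)
  also have "\<dots> = 0"
    using assms(2) by (simp add: mat_mult_def mat_adj_def col_def fun_eq_iff)
  finally show ?thesis
    using vec_inner_self_eq_0D[of n "\<lambda>j. A k j"] assms(3) by blast
qed

lemma star_commute_col_orthogonal:
  assumes "star_commute n A A" "star_commute n A B" "col k A = 0"
  shows "vec_inner n (col t A) (col k B) = 0"
proof -
  have "vec_inner n (col t A) (col k B) = mat_mult n (mat_adj A) B t k"
    by (simp add: vec_inner_def mat_mult_def mat_adj_def col_def)
  also have "\<dots> = mat_mult n B (mat_adj A) t k"
    using assms(2) by (simp add: star_commute_def)
  also have "\<dots> = 0"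
    using star_commute_row_zero_if_col_zero[OF assms(1,3)] by (simp add: mat_mult_def mat_adj_def)
  finally show ?thesis .
qed

locale star_commuting_generators =
  fixes n :: nat and G :: "cmat set"
  assumes finite_generators: "finite G"
    and generators_in_mats: "G \<subseteq> mats n"
    and generators_star_commute: "\<And>A B. A \<in> G \<Longrightarrow> B \<in> G \<Longrightarrow> star_commute n A B"
begin

definition cols_vanishing :: "nat \<Rightarrow> cmat set" where
  "cols_vanishing k = {A \<in> mat.span G. \<forall>t<k. col t A = 0}"

lemma span_in_mats: "mat.span G \<subseteq> mats n"
  using mat.span_minimal[OF generators_in_mats subspace_mats] .

lemma span_star_commute: "A \<in> mat.span G \<Longrightarrow> B \<in> mat.span G \<Longrightarrow> star_commute n A B"
  by (rule mat.span_induct2)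
    (use generators_star_commute subspace_star_commute_left subspace_star_commute_right in auto)

lemma subspace_cols_vanishing: "mat.subspace (cols_vanishing k)"
  using mat_vec.linear_0[OF linear_col] mat_vec.linear_add[OF linear_col]
    mat_vec.linear_scale[OF linear_col]
  by (auto simp: mat.subspace_def cols_vanishing_def mat.span_zero mat.span_add mat.span_scale)

lemma dim_cols_vanishing_le_Suc:
  "mat.dim (cols_vanishing k)
     \<le> vec.dim (col k ` cols_vanishing k) + mat.dim (cols_vanishing (Suc k))"
proof -
  have "mat.dim (cols_vanishing k)
      \<le> vec.dim (col k ` cols_vanishing k) + mat.dim {A \<in> cols_vanishing k. col k A = 0}"
    by (rule mat_vec.dim_le_dim_image_add_dim_kernel[OF linear_col subspace_cols_vanishing _
          finite_generators]) (auto simp: cols_vanishing_def)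
  also have "{A \<in> cols_vanishing k. col k A = 0} = cols_vanishing (Suc k)"
    by (auto simp: cols_vanishing_def less_Suc_eq)
  finally show ?thesis .
qed

lemma dim_cols_vanishing_all: "mat.dim (cols_vanishing n) = 0"
proof -
  have "cols_vanishing n \<subseteq> mat.span {}"
  proof
    fix A assume A: "A \<in> cols_vanishing n"
    then have "A \<in> mats n"
      using span_in_mats by (auto simp: cols_vanishing_def)
    with A have "A = 0"
      by (auto simp: cols_vanishing_def mats_def col_def fun_eq_iff) (metis not_le)
    then show "A \<in> mat.span {}"
      by simp
  qed
  then show ?thesis
    using mat.dim_le_card[of _ "{}"] by simp
qed

lemma dim_cols_vanishing_le:
  assumes "k \<le> n"
  shows "mat.dim (cols_vanishing k) \<le> vec.dim (\<Union>t\<in>{k..<n}. col t ` cols_vanishing t)"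
  using assms
proof (induction k rule: inc_induct)
  case base
  show ?case
    using dim_cols_vanishing_all by simp
next
  case (step k)
  let ?V = "col k ` cols_vanishing k" and ?W = "\<Union>t\<in>{Suc k..<n}. col t ` cols_vanishing t"
  have "{k..<n} = insert k {Suc k..<n}"
    using step.hyps by auto
  then have union: "?W \<union> ?V = (\<Union>t\<in>{k..<n}. col t ` cols_vanishing t)"
    by auto
  have "mat.dim (cols_vanishing k) \<le> vec.dim ?V + mat.dim (cols_vanishing (Suc k))"
    by (rule dim_cols_vanishing_le_Suc)
  also have "\<dots> \<le> vec.dim ?W + vec.dim ?V"
    using step.IH by simp
  also have "\<dots> \<le> vec.dim (?W \<union> ?V)"
    by (rule dim_Un_orthogonal)
      (use col_in_vecs span_in_mats span_star_commute star_commute_col_orthogonal in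
        \<open>auto simp: cols_vanishing_def\<close>)
  finally show ?case
    unfolding union .
qed

theorem dim_le: "mat.dim G \<le> n"
proof -
  have "mat.dim G = mat.dim (cols_vanishing 0)"
    by (simp add: cols_vanishing_def)
  also have "\<dots> \<le> vec.dim (\<Union>t\<in>{0..<n}. col t ` cols_vanishing t)"
    by (rule dim_cols_vanishing_le) simp
  also have "\<dots> \<le> n"
    by (rule vec_dim_le) (use col_in_vecs span_in_mats in \<open>auto simp: cols_vanishing_def\<close>)
  finally show ?thesis .
qed

end

lemma scalars_zero_if_lin_indep_outputs:
  assumes indep: "lin_indep_family n DA K (\<lambda>j. tensor_id_apply n (U j) psi)"
    and comb: "(\<Sum>j<K. mat_scale (c j) (mat_restrict n (U j))) = 0"
  shows "\<forall>j<K. c j = 0"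
proof -
  have "(\<Sum>j<K. c j * tensor_id_apply n (U j) psi q a) = 0" if "q < n" for q a
  proof -
    have "(\<Sum>j<K. c j * tensor_id_apply n (U j) psi q a)
        = (\<Sum>q'<n. (\<Sum>j<K. mat_scale (c j) (mat_restrict n (U j))) q q' * psi q' a)"
      using that
      by (simp add: tensor_id_apply_def sum_apply mat_scale_def mat_restrict_def
          sum_distrib_left sum_distrib_right mult.assoc sum.swap[of _ "{..<K}"])
    also have "\<dots> = 0"
      using comb by simp
    finally show ?thesis .
  qed
  then show ?thesis
    using indep unfolding lin_indep_family_def by blast
qed

theorem corollary1:
  fixes DQ K :: nat and U :: "nat \<Rightarrow> nat \<Rightarrow> nat \<Rightarrow> complex"
  assumes "\<forall>j<K. unitary_op DQ (U j)"
    and "\<forall>j<K. \<forall>l<K. commute_op DQ (U j) (U l)"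
    and "unamb_distinguishable DQ K U"
  shows "K \<le> DQ"
proof -
  obtain DA psi where psi: "lin_indep_family DQ DA K (\<lambda>j. tensor_id_apply DQ (U j) psi)"
    using assms(3) unfolding unamb_distinguishable_def by blast
  define V where "V j = mat_restrict DQ (U j)" for j
  have "K = mat.dim (V ` {..<K})"
    using scalars_zero_if_lin_indep_outputs[OF psi]
    by (intro mat.dim_image_of_independent_family[symmetric]) (simp add: V_def)
  also have "\<dots> \<le> DQ"
  proof (rule star_commuting_generators.dim_le, unfold_locales)
    show "finite (V ` {..<K})"
      by simp
    show "V ` {..<K} \<subseteq> mats DQ"
      by (auto simp: V_def mat_restrict_in_mats)
    show "star_commute DQ A B" if "A \<in> V ` {..<K}" "B \<in> V ` {..<K}" for A B
      using that assms(1,2) star_commute_restrict_if_unitary_commute by (auto simp: V_def)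
  qed
  finally show ?thesis .
qed

end
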